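(* Let $\mathbf{G}$ be a Markov equivalence class of DAGs over a finite set $\mathbf{V}$, $\mathcal{G}\in\mathbf{G}$, $\mathbf{Y}\subseteq\mathbf{V}$ and $\mathbf{Z}=\mathrm{can}_{\mathbf{G}}(\mathbf{Y})$. Then $\mathrm{an}_{\mathcal{G}}(\mathbf{Y})=\mathbf{Z}$ if and only if every edge of $\mathcal{G}$ between a node $Z\in\mathbf{Z}$ and a node $X\in\mathbf{V}\setminus\mathbf{Z}$ is directed out of $Z$ (i.e. $Z\to X$).
   Context: Two DAGs over $\mathbf{V}$ are Markov equivalent iff they have the same skeleton and the same unshielded colliders. $\mathrm{an}_{\mathcal{G}}(\mathbf{Y})$ is the set of nodes that either belong to $\mathbf{Y}$ or have a directed path in $\mathcal{G}$ to some node of $\mathbf{Y}$. $X$ is a compelled ancestor of $Y$ in $\mathbf{G}$ if $X\in\mathrm{an}_{\mathcal{G}}(Y)$ for every $\mathcal{G}\in\mathbf{G}$; $\mathrm{can}_{\mathbf{G}}(\mathbf{Y})$ is the union over $Y\in\mathbf{Y}$ of the sets of compelled ancestors of $Y$. *)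

theory Defs
  imports Main
begin

text \<open>A DAG over the node set V is represented by its set of directed edges
  E (a pair (x,y) in E means x \<rightarrow> y).\<close>

definition dag :: "'a set \<Rightarrow> ('a \<times> 'a) set \<Rightarrow> bool" where
  "dag V E \<longleftrightarrow> E \<subseteq> V \<times> V \<and> acyclic E"

definition adjacent :: "('a \<times> 'a) set \<Rightarrow> 'a \<Rightarrow> 'a \<Rightarrow> bool" where
  "adjacent E x y \<longleftrightarrow> (x, y) \<in> E \<or> (y, x) \<in> E"

definition skeleton :: "('a \<times> 'a) set \<Rightarrow> 'a set set" where
  "skeleton E = {{x, y} | x y. (x, y) \<in> E}"

definition unshielded_colliders :: "('a \<times> 'a) set \<Rightarrow> ('a \<times> 'a \<times> 'a) set" where
  "unshielded_colliders E =
     {(a, b, c). (a, b) \<in> E \<and> (c, b) \<in> E \<and> a \<noteq> c \<and> \<not> adjacent E a c}"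

definition markov_equiv :: "('a \<times> 'a) set \<Rightarrow> ('a \<times> 'a) set \<Rightarrow> bool" where
  "markov_equiv E1 E2 \<longleftrightarrow>
     skeleton E1 = skeleton E2 \<and> unshielded_colliders E1 = unshielded_colliders E2"

definition markov_equiv_class :: "'a set \<Rightarrow> ('a \<times> 'a) set set \<Rightarrow> bool" where
  "markov_equiv_class V GG \<longleftrightarrow>
     (\<exists>E0. dag V E0 \<and> GG = {E. dag V E \<and> markov_equiv E E0})"

definition an :: "('a \<times> 'a) set \<Rightarrow> 'a set \<Rightarrow> 'a set" where
  "an E Y = {x. \<exists>y\<in>Y. (x, y) \<in> E\<^sup>*}"

definition compelled_ancestor :: "('a \<times> 'a) set set \<Rightarrow> 'a \<Rightarrow> 'a \<Rightarrow> bool" where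
  "compelled_ancestor GG x y \<longleftrightarrow> (\<forall>E\<in>GG. x \<in> an E {y})"

definition can :: "'a set \<Rightarrow> ('a \<times> 'a) set set \<Rightarrow> 'a set \<Rightarrow> 'a set" where
  "can V GG Y = (\<Union>y\<in>Y. {x \<in> V. compelled_ancestor GG x y})"

end

theory Submission
  imports Defs
begin

text \<open>The compelled ancestors Z of Y contain Y and lie inside every an_G(Y), so
  an_G(Y) = Z holds exactly when Z is closed under taking parents in G. In a DAG,
  closure under parents means that no edge points into Z from outside, i.e. every edge
  between Z and its complement is directed out of Z.\<close>

definition ancestral :: "('a \<times> 'a) set \<Rightarrow> 'a set \<Rightarrow> bool" where
  "ancestral E Z \<longleftrightarrow> (\<forall>(x, z)\<in>E. z \<in> Z \<longrightarrow> x \<in> Z)"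

lemma ancestral_an: "ancestral E (an E Y)"
  unfolding ancestral_def an_def by (auto intro: converse_rtrancl_into_rtrancl)

lemma an_subset_ancestral:
  assumes "Y \<subseteq> Z" and "ancestral E Z"
  shows "an E Y \<subseteq> Z"
proof
  fix x assume "x \<in> an E Y"
  then obtain y where "y \<in> Y" and "(x, y) \<in> E\<^sup>*" by (auto simp: an_def)
  from \<open>(x, y) \<in> E\<^sup>*\<close> show "x \<in> Z"
  proof (induction rule: converse_rtrancl_induct)
    case base
    then show ?case using \<open>y \<in> Y\<close> assms(1) by auto
  next
    case (step x w)
    then show ?case using assms(2) by (auto simp: ancestral_def)
  qed
qed

lemma an_eq_iff_ancestral:
  assumes "Y \<subseteq> Z" and "Z \<subseteq> an E Y"
  shows "an E Y = Z \<longleftrightarrow> ancestral E Z"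
  using an_subset_ancestral[OF assms(1)] ancestral_an assms(2) by blast

lemma dag_ancestral_iff_edges_out:
  assumes "dag V E"
  shows "ancestral E Z \<longleftrightarrow> (\<forall>z\<in>Z. \<forall>x\<in>V - Z. adjacent E z x \<longrightarrow> (z, x) \<in> E)"
proof
  assume "ancestral E Z"
  then show "\<forall>z\<in>Z. \<forall>x\<in>V - Z. adjacent E z x \<longrightarrow> (z, x) \<in> E"
    by (auto simp: ancestral_def adjacent_def)
next
  assume edges_out: "\<forall>z\<in>Z. \<forall>x\<in>V - Z. adjacent E z x \<longrightarrow> (z, x) \<in> E"
  have "x \<in> Z" if "(x, z) \<in> E" and "z \<in> Z" for x z
  proof (rule ccontr)
    assume "x \<notin> Z"
    moreover have "x \<in> V" using \<open>(x, z) \<in> E\<close> assms by (auto simp: dag_def)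
    ultimately have "(z, x) \<in> E"
      using edges_out \<open>(x, z) \<in> E\<close> \<open>z \<in> Z\<close> by (auto simp: adjacent_def)
    with \<open>(x, z) \<in> E\<close> have "(x, x) \<in> E\<^sup>+" by auto
    then show False using assms by (simp add: dag_def acyclic_def)
  qed
  then show "ancestral E Z" by (auto simp: ancestral_def)
qed

lemma dag_if_in_markov_equiv_class:
  "markov_equiv_class V GG \<Longrightarrow> E \<in> GG \<Longrightarrow> dag V E"
  by (auto simp: markov_equiv_class_def)

lemma subset_can: "Y \<subseteq> V \<Longrightarrow> Y \<subseteq> can V GG Y"
  by (auto simp: can_def compelled_ancestor_def an_def)

lemma can_subset_an: "E \<in> GG \<Longrightarrow> can V GG Y \<subseteq> an E Y"
  by (auto simp: can_def compelled_ancestor_def an_def)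

theorem lemma5:
  fixes V :: "'a set" and GG :: "('a \<times> 'a) set set" and E :: "('a \<times> 'a) set"
    and Y Z :: "'a set"
  assumes "finite V"
    and "markov_equiv_class V GG"
    and "E \<in> GG"
    and "Y \<subseteq> V"
    and "Z = can V GG Y"
  shows "an E Y = Z \<longleftrightarrow>
         (\<forall>z\<in>Z. \<forall>x\<in>V - Z. adjacent E z x \<longrightarrow> (z, x) \<in> E)"
proof -
  have "an E Y = Z \<longleftrightarrow> ancestral E Z"
    using an_eq_iff_ancestral subset_can[OF assms(4)] can_subset_an[OF assms(3)] assms(5)
    by metis
  also have "\<dots> \<longleftrightarrow> (\<forall>z\<in>Z. \<forall>x\<in>V - Z. adjacent E z x \<longrightarrow> (z, x) \<in> E)"
    using dag_ancestral_iff_edges_out dag_if_in_markov_equiv_class assms(2,3) by blast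
  finally show ?thesis .
qed

end
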